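(* For every $\epsilon>0$ there exists $n_0(\epsilon)$ such that for every integer $n>n_0(\epsilon)$ there exists a rainbow set $R\subseteq\mathbb{F}_2^n$ with $|R|\ge\left(\frac{1}{\sqrt 2}-\epsilon\right)\sqrt n$.
   Context: For $x,y\in\mathbb{F}_2^n$, the Hamming distance is $d_H(x,y)=\#\{i:x_i\neq y_i\}$. A set $R\subseteq\mathbb{F}_2^n$ is called rainbow if the $\binom{|R|}{2}$ Hamming distances $d_H(x,y)$ over unordered pairs of distinct points $x,y\in R$ are pairwise distinct. *)

theory Defs
  imports Complex_Main
begin

text \<open>Points of F_2^n are represented as boolean lists of length n.\<close>

definition cube :: "nat \<Rightarrow> bool list set" where
  "cube n = {x. length x = n}"

definition hamming :: "bool list \<Rightarrow> bool list \<Rightarrow> nat" where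
  "hamming x y = card {i. i < length x \<and> x ! i \<noteq> y ! i}"

definition rainbow :: "bool list set \<Rightarrow> bool" where
  "rainbow R \<longleftrightarrow> (\<forall>x\<in>R. \<forall>y\<in>R. \<forall>u\<in>R. \<forall>v\<in>R.
      x \<noteq> y \<longrightarrow> u \<noteq> v \<longrightarrow> {x, y} \<noteq> {u, v} \<longrightarrow> hamming x y \<noteq> hamming u v)"

end

theory Submission
  imports Defs
begin

text \<open>Fix an odd k with (k - 1)^2 + k^2 \<le> n. The i-th point (i < k) is the indicator vector
of a common prefix of length i(k - 1) together with a private block of i coordinates, the blocks
lying beyond all prefixes and pairwise disjoint. Two points i < j then differ in (j - i)(k - 1)
prefix coordinates and in i + j block coordinates, so their distance is (j - i)k + 2i. As 2 is
invertible modulo the odd number k, this value determines i and then j - i, so all distances are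
distinct. Taking k \<approx> sqrt(n/2) gives the bound.\<close>

definition char_list :: "nat \<Rightarrow> nat set \<Rightarrow> bool list" where
  "char_list n S = map (\<lambda>p. p \<in> S) [0..<n]"

lemma char_list_in_cube: "char_list n S \<in> cube n"
  by (simp add: char_list_def cube_def)

lemma hamming_char_list: "hamming (char_list n S) (char_list n T) = card ({..<n} \<inter> sym_diff S T)"
  unfolding hamming_def char_list_def by (rule arg_cong[where f = card]) auto

lemma hamming_self: "hamming x x = 0"
  by (simp add: hamming_def)

lemma hamming_commute: "length x = length y \<Longrightarrow> hamming x y = hamming y x"
  unfolding hamming_def by metis

lemma rainbow_image:
  fixes f :: "'a::linorder \<Rightarrow> bool list"
  assumes "f ` I \<subseteq> cube n"
    and "\<And>i j i' j'. \<lbrakk>i \<in> I; j \<in> I; i' \<in> I; j' \<in> I; i < j; i' < j';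
      hamming (f i) (f j) = hamming (f i') (f j')\<rbrakk> \<Longrightarrow> i = i' \<and> j = j'"
  shows "rainbow (f ` I)"
  unfolding rainbow_def
proof (intro ballI impI notI)
  have by_min_max: "hamming (f a) (f b) = hamming (f (min a b)) (f (max a b))" if "a \<in> I" "b \<in> I" for a b
    using that assms(1) hamming_commute[of "f a" "f b"] by (auto simp: cube_def min_def max_def)
  fix x y u v
  assume "x \<in> f ` I" "y \<in> f ` I" "u \<in> f ` I" "v \<in> f ` I"
  then obtain a b c d where abcd: "a \<in> I" "b \<in> I" "c \<in> I" "d \<in> I"
    and xyuv: "x = f a" "y = f b" "u = f c" "v = f d" by blast
  assume "x \<noteq> y" "u \<noteq> v" "{x, y} \<noteq> {u, v}" "hamming x y = hamming u v"
  then have "a \<noteq> b" "c \<noteq> d"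
    and "hamming (f (min a b)) (f (max a b)) = hamming (f (min c d)) (f (max c d))"
    using abcd xyuv by_min_max by auto
  then have "min a b = min c d" "max a b = max c d"
    using assms(2)[of "min a b" "max a b" "min c d" "max c d"] abcd by (auto simp: min_def max_def)
  then have "{a, b} = {c, d}"
    by (auto simp: min_def max_def split: if_splits)
  then show False using \<open>{x, y} \<noteq> {u, v}\<close> xyuv by auto
qed

lemma mult_add_coprime_mult_eq_imp_eq:
  fixes g g' i i' c k :: nat
  assumes "coprime c k" "i < k" "i' < k" "g * k + c * i = g' * k + c * i'"
  shows "g = g' \<and> i = i'"
proof -
  have "int c * (int i - int i') = int k * (int g' - int g)"
    using arg_cong[OF assms(4), of int] by (simp add: algebra_simps)
  then have "int k dvd int c * (int i - int i')" by simp
  then have "int k dvd int i - int i'"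
    using assms(1) by (simp add: coprime_dvd_mult_right_iff coprime_commute)
  moreover have "\<bar>int i - int i'\<bar> < int k" using assms(2,3) by simp
  ultimately have "int i - int i' = 0"
    using dvd_imp_le_int[of "int i - int i'" "int k"] by (cases "int i - int i' = 0") auto
  then have "i = i'" by simp
  moreover have "k > 0" using assms(2) by simp
  ultimately show ?thesis using assms(4) by simp
qed

lemma card_sym_diff_prefix_interval:
  fixes a b c d s t :: nat
  assumes "a \<le> b" "b \<le> c" "c + s \<le> d"
  shows "card (sym_diff ({..<a} \<union> {c..<c + s}) ({..<b} \<union> {d..<d + t})) = b - a + s + t"
proof -
  have "sym_diff ({..<a} \<union> {c..<c + s}) ({..<b} \<union> {d..<d + t})
    = {a..<b} \<union> {c..<c + s} \<union> {d..<d + t}"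
    using assms by auto
  moreover have "card ({a..<b} \<union> {c..<c + s} \<union> {d..<d + t}) = b - a + s + t"
    using assms by (subst card_Un_disjoint; auto simp: card_Un_disjoint)+
  ultimately show ?thesis by simp
qed

definition rainbow_support :: "nat \<Rightarrow> nat \<Rightarrow> nat set" where
  "rainbow_support k i = {..< i * (k - 1)} \<union> {(k - 1)^2 + i * k ..< (k - 1)^2 + i * k + i}"

lemma rainbow_support_subset:
  assumes "i < k"
  shows "rainbow_support k i \<subseteq> {..< (k - 1)^2 + k^2}"
proof -
  have "i \<le> k - 1" using assms by simp
  then have "i * (k - 1) \<le> (k - 1)^2" by (simp add: power2_eq_square mult_le_mono1)
  moreover have "i * k + i < k^2"
  proof -
    have "i * k + i < i * k + k" using assms by simp
    also have "\<dots> = (i + 1) * k" by simp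
    also have "\<dots> \<le> k^2" unfolding power2_eq_square using assms by (intro mult_le_mono1) simp
    finally show ?thesis .
  qed
  ultimately show ?thesis unfolding rainbow_support_def by auto
qed

lemma card_sym_diff_rainbow_support:
  assumes "i < j" "j < k"
  shows "card (sym_diff (rainbow_support k i) (rainbow_support k j)) = (j - i) * k + 2 * i"
proof -
  have "i * k + i < (i + 1) * k" using assms by simp
  also have "\<dots> \<le> j * k" using assms by (intro mult_le_mono1) simp
  finally have "(k - 1)^2 + i * k + i \<le> (k - 1)^2 + j * k" by simp
  moreover have "i * (k - 1) \<le> j * (k - 1)" using assms by simp
  moreover have "j \<le> k - 1" using assms by simp
  then have "j * (k - 1) \<le> (k - 1)^2 + i * k" by (simp add: power2_eq_square mult_le_mono1 trans_le_add1)
  ultimately have "card (sym_diff (rainbow_support k i) (rainbow_support k j))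
      = j * (k - 1) - i * (k - 1) + i + j"
    unfolding rainbow_support_def by (subst card_sym_diff_prefix_interval) (simp_all add: add.assoc)
  also have "\<dots> = (j - i) * k + 2 * i"
  proof -
    obtain m where "k = Suc m" using assms by (cases k) auto
    moreover obtain d where "j = i + d" using assms less_imp_add_positive by blast
    ultimately show ?thesis by (simp add: algebra_simps)
  qed
  finally show ?thesis .
qed

lemma rainbow_set_of_odd_size:
  assumes "odd k" "(k - 1)^2 + k^2 \<le> n"
  shows "\<exists>R. R \<subseteq> cube n \<and> finite R \<and> rainbow R \<and> card R = k"
proof -
  define f where "f i = char_list n (rainbow_support k i)" for i
  have dist: "hamming (f i) (f j) = (j - i) * k + 2 * i" if "i < j" "j < k" for i j
  proof -
    have "sym_diff (rainbow_support k i) (rainbow_support k j) \<subseteq> {..<n}"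
      using rainbow_support_subset[of i k] rainbow_support_subset[of j k] that assms(2) by auto
    then show ?thesis
      unfolding f_def hamming_char_list using card_sym_diff_rainbow_support[OF that]
      by (simp add: Int_absorb1)
  qed
  have cube: "f ` {..<k} \<subseteq> cube n" by (auto simp: f_def char_list_in_cube)
  have "rainbow (f ` {..<k})"
  proof (rule rainbow_image[OF cube])
    fix i j i' j' :: nat
    assume "i \<in> {..<k}" "j \<in> {..<k}" "i' \<in> {..<k}" "j' \<in> {..<k}" "i < j" "i' < j'"
      "hamming (f i) (f j) = hamming (f i') (f j')"
    moreover have "coprime 2 k" using assms(1) by simp
    ultimately have "j - i = j' - i' \<and> i = i'"
      using dist mult_add_coprime_mult_eq_imp_eq[of 2 k i i' "j - i" "j' - i'"] by auto
    then show "i = i' \<and> j = j'" using \<open>i < j\<close> \<open>i' < j'\<close> by auto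
  qed
  moreover have "inj_on f {..<k}"
  proof (rule linorder_inj_onI')
    fix i j assume "i \<in> {..<k}" "j \<in> {..<k}" "i < j"
    then have "hamming (f i) (f j) \<noteq> 0" using dist by simp
    then show "f i \<noteq> f j" using hamming_self by metis
  qed
  ultimately show ?thesis using cube by (metis card_image card_lessThan finite_imageI finite_lessThan)
qed

lemma exists_odd_nat_between:
  fixes x :: real
  assumes "1 \<le> x"
  shows "\<exists>k::nat. odd k \<and> real k \<le> x \<and> x - 2 < real k"
proof -
  define t where "t = nat \<lfloor>x\<rfloor>"
  have t: "1 \<le> t" "real t \<le> x" "x - 1 < real t" using assms unfolding t_def by linarith+
  show ?thesis
  proof (cases "odd t")
    case True then show ?thesis using t by (intro exI[of _ t]) auto
  next
    case False then show ?thesis using t by (intro exI[of _ "t - 1"]) auto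
  qed
qed

lemma large_rainbow_set:
  assumes "2 \<le> n"
  shows "\<exists>R. R \<subseteq> cube n \<and> finite R \<and> rainbow R \<and> sqrt (real n / 2) - 2 < real (card R)"
proof -
  obtain k where k: "odd k" "real k \<le> sqrt (real n / 2)" "sqrt (real n / 2) - 2 < real k"
    using exists_odd_nat_between[of "sqrt (real n / 2)"] assms by auto
  have "real k ^ 2 \<le> real n / 2"
    using power_mono[OF k(2), of 2] by simp
  then have "2 * k^2 \<le> n" by (simp add: field_simps flip: of_nat_power)
  moreover have "(k - 1)^2 \<le> k^2" by (simp add: power_mono)
  ultimately have "(k - 1)^2 + k^2 \<le> n" by linarith
  then obtain R where "R \<subseteq> cube n" "finite R" "rainbow R" "card R = k"
    using rainbow_set_of_odd_size k(1) by blast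
  then show ?thesis using k(3) by blast
qed

theorem theorem1p5:
  shows "\<forall>\<epsilon>::real. \<epsilon> > 0 \<longrightarrow> (\<exists>n0::nat. \<forall>n::nat. n > n0 \<longrightarrow>
    (\<exists>R. R \<subseteq> cube n \<and> finite R \<and> rainbow R \<and>
         real (card R) \<ge> (1 / sqrt 2 - \<epsilon>) * sqrt (real n)))"
proof (intro allI impI)
  fix \<epsilon> :: real
  assume "\<epsilon> > 0"
  then have "filterlim (\<lambda>n. \<epsilon> * sqrt (real n)) at_top sequentially"
    by (intro filterlim_tendsto_pos_mult_at_top[OF tendsto_const]
        filterlim_compose[OF sqrt_at_top filterlim_real_sequentially])
  then have "eventually (\<lambda>n. 2 \<le> \<epsilon> * sqrt (real n) \<and> 2 \<le> n) sequentially"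
    by (intro eventually_conj) (simp_all add: filterlim_at_top)
  then obtain N where N: "\<And>n. N \<le> n \<Longrightarrow> 2 \<le> \<epsilon> * sqrt (real n) \<and> 2 \<le> n"
    unfolding eventually_sequentially by blast
  have "\<exists>R. R \<subseteq> cube n \<and> finite R \<and> rainbow R \<and>
      real (card R) \<ge> (1 / sqrt 2 - \<epsilon>) * sqrt (real n)" if "N < n" for n
  proof -
    obtain R where R: "R \<subseteq> cube n" "finite R" "rainbow R" "sqrt (real n / 2) - 2 < real (card R)"
      using large_rainbow_set N \<open>N < n\<close> by (meson less_imp_le)
    have "(1 / sqrt 2 - \<epsilon>) * sqrt (real n) = sqrt (real n / 2) - \<epsilon> * sqrt (real n)"
      by (simp add: real_sqrt_divide algebra_simps)
    also have "\<dots> \<le> real (card R)" using N[of n] R(4) \<open>N < n\<close> by linarith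
    finally show ?thesis using R by blast
  qed
  then show "\<exists>n0::nat. \<forall>n>n0. \<exists>R. R \<subseteq> cube n \<and> finite R \<and> rainbow R \<and>
      real (card R) \<ge> (1 / sqrt 2 - \<epsilon>) * sqrt (real n)" by blast
qed

end
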